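(* Let $C$ be an independent set of the Kneser graph of flags of type $\{2,3\}$ of $\mathrm{PG}(6,q)$ such that every plane and every solid of $\mathrm{PG}(6,q)$ occurs in at most $q+1$ flags of $C$. For a point $P$ let $\Delta_P(C)$ be the set of flags $(E,S)\in C$ with $P\in E$. Let $P_1,P_2,P_3$ be non-collinear points. (i) If $|\Delta_{P_1}(C)|>(q+1)(6q^6+10q^5+17q^4+15q^3+15q^2+9q+5)$, then there are flags $f_i=(E_i,S_i)\in C$, $i\in\{1,2,3\}$, with $\dim\langle E_1,E_2,E_3\rangle\ge 5$, $P_2,P_3\notin S_1,S_2,S_3$, and $E_i\cap E_j=P_1$ and $P_2,P_3\notin\langle E_i,E_j\rangle$ for all distinct $i,j$. (ii) If there are flags $f_1,f_2,f_3$ with the properties in (i) and $|\Delta_{P_2}(C)|>(q+1)(6q^6+10q^5+17q^4+18q^3+15q^2+9q+5)$, then there are flags $f_i'=(E_i',S_i')\in C$, $i\in\{1,2,3\}$, with $\dim\langle E_1',E_2',E_3'\rangle\ge 5$, $P_1,P_3\notin S_1',S_2',S_3'$, $\dim(S_i\cap S_j')\le 1$ for all $i,j\in\{1,2,3\}$, and $E_i'\cap E_j'=P_2$ and $P_1,P_3\notin\langle E_i',E_j'\rangle$ for all distinct $i,j$.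
   Context: Dimensions are projective (points 0, planes 2, solids 3). A flag of type $\{2,3\}$ is a pair $(E,S)$ of a plane $E$ and a solid $S$ with $E\subseteq S$; in the Kneser graph distinct flags $(E,S),(E',S')$ are adjacent iff $E\cap S'=\emptyset$ and $E'\cap S=\emptyset$. $\langle\cdot\rangle$ denotes the span. *)

theory Defs
  imports "HOL-Analysis.Finite_Cartesian_Product" "HOL-Library.Numeral_Type"
begin

text \<open>The projective space PG(6,q) is modelled as the lattice of linear subspaces
of the 7-dimensional vector space V = F^7 over a finite field F with q = CARD(F) elements.\<close>

type_synonym 'a vec7 = "'a ^ 7"

definition sc :: "'a::field \<Rightarrow> 'a vec7 \<Rightarrow> 'a vec7" where
  "sc c x = (\<chi> i. c * x $ i)"

lemma vector_space_sc: "vector_space (sc :: 'a::field \<Rightarrow> 'a vec7 \<Rightarrow> 'a vec7)"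
  by unfold_locales (simp_all add: sc_def vec_eq_iff algebra_simps)

definition lsub :: "'a::field vec7 set \<Rightarrow> bool" where
  "lsub W = module.subspace sc W"

definition lspan :: "'a::field vec7 set \<Rightarrow> 'a vec7 set" where
  "lspan A = module.span sc A"

definition pdim :: "'a::field vec7 set \<Rightarrow> int" where
  "pdim W = int (vector_space.dim sc W) - 1"

definition is_point :: "'a::field vec7 set \<Rightarrow> bool" where
  "is_point W \<longleftrightarrow> lsub W \<and> pdim W = 0"

definition is_plane :: "'a::field vec7 set \<Rightarrow> bool" where
  "is_plane W \<longleftrightarrow> lsub W \<and> pdim W = 2"

definition is_solid :: "'a::field vec7 set \<Rightarrow> bool" where
  "is_solid W \<longleftrightarrow> lsub W \<and> pdim W = 3"

text \<open>projectively empty intersection = trivial vector intersection\<close>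
definition disjoint_proj :: "'a::field vec7 set \<Rightarrow> 'a vec7 set \<Rightarrow> bool" where
  "disjoint_proj A B \<longleftrightarrow> A \<inter> B = {0}"

definition is_flag :: "'a::field vec7 set \<times> 'a vec7 set \<Rightarrow> bool" where
  "is_flag f \<longleftrightarrow> is_plane (fst f) \<and> is_solid (snd f) \<and> fst f \<subseteq> snd f"

definition kneser_adj :: "'a::field vec7 set \<times> 'a vec7 set \<Rightarrow> 'a vec7 set \<times> 'a vec7 set \<Rightarrow> bool" where
  "kneser_adj f g \<longleftrightarrow> is_flag f \<and> is_flag g \<and> f \<noteq> g \<and>
     disjoint_proj (fst f) (snd g) \<and> disjoint_proj (fst g) (snd f)"

definition kneser_indep :: "('a::field vec7 set \<times> 'a vec7 set) set \<Rightarrow> bool" where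
  "kneser_indep C \<longleftrightarrow> (\<forall>f\<in>C. is_flag f) \<and> (\<forall>f\<in>C. \<forall>g\<in>C. \<not> kneser_adj f g)"

definition Delta :: "'a::field vec7 set \<Rightarrow> ('a vec7 set \<times> 'a vec7 set) set
    \<Rightarrow> ('a vec7 set \<times> 'a vec7 set) set" where
  "Delta P C = {f \<in> C. P \<subseteq> fst f}"

definition good_triple :: "('a::field vec7 set \<times> 'a vec7 set) set \<Rightarrow> 'a vec7 set \<Rightarrow>
    'a vec7 set \<Rightarrow> 'a vec7 set \<Rightarrow> ('a vec7 set \<times> 'a vec7 set) \<Rightarrow>
    ('a vec7 set \<times> 'a vec7 set) \<Rightarrow> ('a vec7 set \<times> 'a vec7 set) \<Rightarrow> bool" where
  "good_triple C P Q R f1 f2 f3 \<longleftrightarrow>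
     (let fs = [f1, f2, f3] in
       (\<forall>f\<in>set fs. f \<in> C) \<and>
       pdim (lspan (fst f1 \<union> fst f2 \<union> fst f3)) \<ge> 5 \<and>
       (\<forall>f\<in>set fs. \<not> Q \<subseteq> snd f \<and> \<not> R \<subseteq> snd f) \<and>
       (\<forall>i<3. \<forall>j<3. i \<noteq> j \<longrightarrow>
          fst (fs ! i) \<inter> fst (fs ! j) = P \<and>
          \<not> Q \<subseteq> lspan (fst (fs ! i) \<union> fst (fs ! j)) \<and>
          \<not> R \<subseteq> lspan (fst (fs ! i) \<union> fst (fs ! j))))"

end

theory Submission
  imports Defs "HOL-Analysis.Cartesian_Space"
begin

text \<open>Every plane and every solid lies in at most q + 1 flags of C, so excluding b planes and
  s solids excludes at most (q + 1)(b + s) flags; as soon as Delta P C is larger, some flag through P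
  survives. The three flags are chosen greedily. Each of them avoids the solids through the lines PQ
  and PR (and, for part (ii), the at most q^3 solids through P2 that meet one of S1, S2, S3 in a
  plane). A later plane E avoids every plane containing a line through P of span (E' + Q) or
  span (E' + R) for the earlier planes E'; this forces E meet E' = P and Q, R outside span (E + E').
  The third plane also avoids the planes through P inside the 4-space spanned by the first two, which
  gives dimension 5 for the span of all three. The numbers of excluded subspaces are Gaussian
  binomial coefficients, obtained by counting ordered bases.\<close>

lemma sc_eq_scaleR: "sc = ((*s) :: 'a::field \<Rightarrow> 'a vec7 \<Rightarrow> 'a vec7)"
  by (intro ext) (simp add: sc_def vector_scalar_mult_def)

lemma lsub_iff: "lsub W \<longleftrightarrow> vec.subspace W"
  unfolding lsub_def sc_eq_scaleR ..

lemma lspan_eq: "lspan A = vec.span A"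
  unfolding lspan_def sc_eq_scaleR ..

lemma pdim_eq: "pdim W = int (vec.dim W) - 1"
  unfolding pdim_def sc_eq_scaleR ..

lemma is_point_iff: "is_point W \<longleftrightarrow> vec.subspace W \<and> vec.dim W = 1"
  unfolding is_point_def lsub_iff pdim_eq by auto

lemma is_plane_iff: "is_plane W \<longleftrightarrow> vec.subspace W \<and> vec.dim W = 3"
  unfolding is_plane_def lsub_iff pdim_eq by auto

lemma is_solid_iff: "is_solid W \<longleftrightarrow> vec.subspace W \<and> vec.dim W = 4"
  unfolding is_solid_def lsub_iff pdim_eq by auto

lemma is_flag_iff:
  "is_flag f \<longleftrightarrow> vec.subspace (fst f) \<and> vec.dim (fst f) = 3 \<and>
     vec.subspace (snd f) \<and> vec.dim (snd f) = 4 \<and> fst f \<subseteq> snd f"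
  unfolding is_flag_def is_plane_iff is_solid_iff by auto

lemma card_field_ge_2: "2 \<le> CARD('a::{field,finite})"
proof -
  have "card {0::'a, 1} \<le> CARD('a)" by (rule card_mono) auto
  then show ?thesis by simp
qed

section \<open>Counting subspaces over a finite field\<close>

lemma card_span_independent:
  fixes B :: "('a::{field,finite}^'n) set"
  assumes "vec.independent B"
  shows "card (vec.span B) = CARD('a) ^ card B"
proof -
  have "finite B" using assms vec.finiteI_independent by blast
  then show ?thesis using assms
  proof (induction B rule: finite_induct)
    case empty
    then show ?case by simp
  next
    case (insert x F)
    have indep: "vec.independent F" and x: "x \<notin> vec.span F"
      using insert.prems insert.hyps vec.independent_insert[of x F] by (simp_all split: if_splits)
    let ?g = "\<lambda>(c, y). c *s x + y"
    have image: "vec.span (insert x F) = ?g ` (UNIV \<times> vec.span F)"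
    proof
      show "vec.span (insert x F) \<subseteq> ?g ` (UNIV \<times> vec.span F)"
      proof
        fix z assume "z \<in> vec.span (insert x F)"
        then obtain k where "z - k *s x \<in> vec.span F" using vec.span_insert by blast
        then show "z \<in> ?g ` (UNIV \<times> vec.span F)"
          by (intro image_eqI[of _ _ "(k, z - k *s x)"]) auto
      qed
      show "?g ` (UNIV \<times> vec.span F) \<subseteq> vec.span (insert x F)"
        by (clarsimp simp: vec.span_breakdown_eq) (metis add_diff_cancel_left')
    qed
    have "inj_on ?g (UNIV \<times> vec.span F)"
    proof (rule inj_onI, clarsimp)
      fix c y c' y'
      assume y: "y \<in> vec.span F" "y' \<in> vec.span F" and eq: "c *s x + y = c' *s x + y'"
      show "c = c' \<and> y = y'"
      proof (cases "c = c'")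
        case True
        then show ?thesis using eq by simp
      next
        case False
        have "(c - c') *s x = y' - y" using eq by (simp add: vector_sub_rdistrib algebra_simps)
        then have "x = inverse (c - c') *s (y' - y)" using False
          by (metis vector_smult_assoc field_class.field_inverse right_minus_eq vector_smult_lid)
        moreover have "inverse (c - c') *s (y' - y) \<in> vec.span F"
          by (intro vec.span_scale vec.span_diff y)
        ultimately show ?thesis using x by simp
      qed
    qed
    then have "card (vec.span (insert x F)) = CARD('a) * card (vec.span F)"
      unfolding image by (simp add: card_image card_cartesian_product)
    then show ?case using insert indep by simp
  qed
qed

lemma card_subspace:
  fixes S :: "('a::{field,finite}^'n) set"
  assumes "vec.subspace S"
  shows "card S = CARD('a) ^ vec.dim S"
proof -
  obtain B where B: "B \<subseteq> S" "vec.independent B" "S \<subseteq> vec.span B" "card B = vec.dim S"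
    using vec.basis_exists by blast
  then have "vec.span B = S" using assms vec.span_subspace by blast
  then show ?thesis using card_span_independent[OF B(2)] B(4) by simp
qed

definition subspaces_between :: "('a::field^'n) set \<Rightarrow> ('a^'n) set \<Rightarrow> nat \<Rightarrow> ('a^'n) set set" where
  "subspaces_between U W k = {K. vec.subspace K \<and> U \<subseteq> K \<and> K \<subseteq> W \<and> vec.dim K = k}"

definition extension_lists :: "('a::field^'n) set \<Rightarrow> ('a^'n) set \<Rightarrow> nat \<Rightarrow> ('a^'n) list set" where
  "extension_lists U W m = {vs. length vs = m \<and> set vs \<subseteq> W \<and> vec.dim (U \<union> set vs) = vec.dim U + m}"

lemma finite_extension_lists [simp]:
  "finite (extension_lists U (W :: ('a::{field,finite}^'n) set) m)"
  by (rule finite_subset[of _ "{vs. set vs \<subseteq> UNIV \<and> length vs = m}"])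
     (auto simp: extension_lists_def intro: finite_lists_length_eq[of UNIV m, simplified])

lemma dim_Un_set_le: "vec.dim (U \<union> set vs) \<le> vec.dim U + length vs"
proof (induction vs)
  case Nil
  then show ?case by simp
next
  case (Cons v vs)
  have "U \<union> set (v # vs) = insert v (U \<union> set vs)" by auto
  then show ?case using Cons vec.dim_insert[of v "U \<union> set vs"] by (simp split: if_splits)
qed

lemma extension_lists_Suc:
  "extension_lists U W (Suc m) =
     (\<lambda>(vs, v). v # vs) ` (SIGMA vs:extension_lists U W m. W - vec.span (U \<union> set vs))"
proof (intro equalityI subsetI)
  fix xs assume xs: "xs \<in> extension_lists U W (Suc m)"
  then obtain v vs where xs_eq: "xs = v # vs" unfolding extension_lists_def by (cases xs) auto
  have ins: "U \<union> set (v # vs) = insert v (U \<union> set vs)" by auto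
  have dim: "vec.dim (insert v (U \<union> set vs)) = vec.dim U + Suc m" and len: "length vs = m"
    and sub: "set vs \<subseteq> W" "v \<in> W"
    using xs unfolding xs_eq extension_lists_def ins by auto
  have "vec.dim (U \<union> set vs) \<le> vec.dim U + m" using dim_Un_set_le[of U vs] len by simp
  then have "v \<notin> vec.span (U \<union> set vs)" "vec.dim (U \<union> set vs) = vec.dim U + m"
    using dim vec.dim_insert[of v "U \<union> set vs"] by (auto split: if_splits)
  then show "xs \<in> (\<lambda>(vs, v). v # vs) ` (SIGMA vs:extension_lists U W m. W - vec.span (U \<union> set vs))"
    using xs_eq len sub by (auto simp: extension_lists_def intro!: image_eqI[of _ _ "(vs, v)"])
next
  fix xs
  assume "xs \<in> (\<lambda>(vs, v). v # vs) ` (SIGMA vs:extension_lists U W m. W - vec.span (U \<union> set vs))"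
  then obtain vs v where "xs = v # vs" "vs \<in> extension_lists U W m" "v \<in> W"
    "v \<notin> vec.span (U \<union> set vs)" by auto
  moreover have "U \<union> set (v # vs) = insert v (U \<union> set vs)" by auto
  ultimately show "xs \<in> extension_lists U W (Suc m)"
    using vec.dim_insert[of v "U \<union> set vs"] by (auto simp: extension_lists_def)
qed

lemma card_extension_lists:
  fixes U W :: "('a::{field,finite}^'n) set"
  assumes "vec.subspace U" "vec.subspace W" "U \<subseteq> W"
  shows "card (extension_lists U W m) = (\<Prod>i<m. CARD('a) ^ vec.dim W - CARD('a) ^ (vec.dim U + i))"
proof (induction m)
  case 0
  have "extension_lists U W 0 = {[]}" unfolding extension_lists_def by auto
  then show ?case by simp
next
  case (Suc m)
  have card_choices: "card (W - vec.span (U \<union> set vs)) = CARD('a) ^ vec.dim W - CARD('a) ^ (vec.dim U + m)"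
    if "vs \<in> extension_lists U W m" for vs
  proof -
    have "vec.span (U \<union> set vs) \<subseteq> W"
      using that assms by (intro vec.span_minimal) (auto simp: extension_lists_def)
    then show ?thesis
      using that card_subspace[OF assms(2)] card_subspace[OF vec.subspace_span, of "U \<union> set vs"]
      by (simp add: card_Diff_subset extension_lists_def)
  qed
  have "inj_on (\<lambda>(vs, v). v # vs) (SIGMA vs:extension_lists U W m. W - vec.span (U \<union> set vs))"
    by (auto simp: inj_on_def)
  then have "card (extension_lists U W (Suc m)) =
      (\<Sum>vs\<in>extension_lists U W m. card (W - vec.span (U \<union> set vs)))"
    unfolding extension_lists_Suc by (simp add: card_image card_SigmaI)
  also have "\<dots> = card (extension_lists U W m) * (CARD('a) ^ vec.dim W - CARD('a) ^ (vec.dim U + m))"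
    using card_choices by simp
  finally show ?case using Suc by (simp add: mult.commute)
qed

text \<open>Double counting: a list in extension_lists U W m spans, together with U, a subspace K of
  dimension dim U + m, and the lists giving K are exactly those in extension_lists U K m.\<close>
lemma card_subspaces_between:
  fixes U W :: "('a::{field,finite}^'n) set"
  assumes "vec.subspace U" "vec.subspace W" "U \<subseteq> W"
  shows "card (subspaces_between U W (vec.dim U + m)) *
           (\<Prod>i<m. CARD('a) ^ (vec.dim U + m) - CARD('a) ^ (vec.dim U + i))
       = (\<Prod>i<m. CARD('a) ^ vec.dim W - CARD('a) ^ (vec.dim U + i))"
proof -
  let ?Ks = "subspaces_between U W (vec.dim U + m)"
  have partition: "extension_lists U W m = (\<Union>K\<in>?Ks. extension_lists U K m)"
  proof (intro equalityI subsetI)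
    fix vs assume vs: "vs \<in> extension_lists U W m"
    let ?K = "vec.span (U \<union> set vs)"
    have "?K \<subseteq> W" using vs assms by (intro vec.span_minimal) (auto simp: extension_lists_def)
    then have "?K \<in> ?Ks"
      using vs vec.span_superset[of "U \<union> set vs"] by (auto simp: subspaces_between_def extension_lists_def)
    moreover have "vs \<in> extension_lists U ?K m"
      using vs vec.span_superset[of "U \<union> set vs"] by (auto simp: extension_lists_def)
    ultimately show "vs \<in> (\<Union>K\<in>?Ks. extension_lists U K m)" by blast
  qed (auto simp: extension_lists_def subspaces_between_def)
  have spanned: "K = vec.span (U \<union> set vs)" if "K \<in> ?Ks" "vs \<in> extension_lists U K m" for K vs
  proof -
    have "vec.span (U \<union> set vs) \<subseteq> K"
      using that by (intro vec.span_minimal) (auto simp: extension_lists_def subspaces_between_def)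
    then show ?thesis
      using that vec.subspace_dim_equal[of "vec.span (U \<union> set vs)" K]
      by (auto simp: extension_lists_def subspaces_between_def)
  qed
  have "card (extension_lists U W m) = (\<Sum>K\<in>?Ks. card (extension_lists U K m))"
    unfolding partition by (rule card_UN_disjoint) (use spanned in auto)
  also have "\<dots> = card ?Ks * (\<Prod>i<m. CARD('a) ^ (vec.dim U + m) - CARD('a) ^ (vec.dim U + i))"
    by (simp add: subspaces_between_def assms card_extension_lists)
  finally show ?thesis using card_extension_lists[OF assms, of m] by simp
qed

lemma of_nat_power_diff:
  "b \<le> a \<Longrightarrow> 0 < q \<Longrightarrow> (of_nat (q ^ a - q ^ b) :: int) = of_nat q ^ a - of_nat q ^ b"
  by (simp add: of_nat_diff power_increasing)

text \<open>Stated over int, so that each concrete count reduces to a ring identity without truncated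
  subtraction.\<close>
lemma card_subspaces_between_eqI:
  fixes U W :: "('a::{field,finite}^'n) set"
  defines "q \<equiv> int CARD('a)"
  assumes "vec.subspace U" "vec.subspace W" "U \<subseteq> W" "vec.dim U = u" "vec.dim W = w"
    and "k = u + m" "k \<le> w"
    and "int N * (\<Prod>i<m. q ^ k - q ^ (u + i)) = (\<Prod>i<m. q ^ w - q ^ (u + i))"
  shows "card (subspaces_between U W k) = N"
proof -
  have q: "0 < CARD('a)" "1 < q" using card_field_ge_2[where 'a='a] by (auto simp: q_def)
  have "int (card (subspaces_between U W k)) * (\<Prod>i<m. q ^ k - q ^ (u + i))
      = (\<Prod>i<m. q ^ w - q ^ (u + i))"
    using arg_cong[OF card_subspaces_between[OF assms(2-4), of m], of int] assms(5-8) q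
    by (simp add: q_def of_nat_prod of_nat_power_diff)
  moreover have "(\<Prod>i<m. q ^ k - q ^ (u + i)) \<noteq> 0"
    using q assms(7) by (simp add: power_strict_increasing_iff)
  ultimately show ?thesis using assms(9) by (metis mult_right_cancel of_nat_eq_iff)
qed

lemma card_solids_through_line:
  fixes L :: "'a::{field,finite} vec7 set"
  defines "q \<equiv> CARD('a)"
  assumes "vec.subspace L" "vec.dim L = 2"
  shows "card (subspaces_between L UNIV 4) = (q^4 + q^3 + q^2 + q + 1) * (q^2 + 1)"
  unfolding q_def
  by (rule card_subspaces_between_eqI[OF assms(2) vec.subspace_UNIV subset_UNIV assms(3), where w=7 and m=2])
     (simp_all add: card_cart_basis eval_nat_numeral, algebra)

lemma card_planes_through_line:
  fixes L :: "'a::{field,finite} vec7 set"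
  defines "q \<equiv> CARD('a)"
  assumes "vec.subspace L" "vec.dim L = 2"
  shows "card (subspaces_between L UNIV 3) = q^4 + q^3 + q^2 + q + 1"
  unfolding q_def
  by (rule card_subspaces_between_eqI[OF assms(2) vec.subspace_UNIV subset_UNIV assms(3), where w=7 and m=1])
     (simp_all add: card_cart_basis eval_nat_numeral, algebra)

lemma card_lines_through_point_in_solid:
  fixes P S :: "('a::{field,finite}^'n) set"
  defines "q \<equiv> CARD('a)"
  assumes "vec.subspace P" "vec.subspace S" "P \<subseteq> S" "vec.dim P = 1" "vec.dim S = 4"
  shows "card (subspaces_between P S 2) = q^2 + q + 1"
  unfolding q_def
  by (rule card_subspaces_between_eqI[OF assms(2-6), where m=1]) (simp_all add: eval_nat_numeral, algebra)

lemma card_lines_through_point_in_plane: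
  fixes P E :: "('a::{field,finite}^'n) set"
  defines "q \<equiv> CARD('a)"
  assumes "vec.subspace P" "vec.subspace E" "P \<subseteq> E" "vec.dim P = 1" "vec.dim E = 3"
  shows "card (subspaces_between P E 2) = q + 1"
  unfolding q_def
  by (rule card_subspaces_between_eqI[OF assms(2-6), where m=1]) (simp_all add: eval_nat_numeral, algebra)

lemma card_planes_through_point_in_4space:
  fixes P W :: "('a::{field,finite}^'n) set"
  defines "q \<equiv> CARD('a)"
  assumes "vec.subspace P" "vec.subspace W" "P \<subseteq> W" "vec.dim P = 1" "vec.dim W = 5"
  shows "card (subspaces_between P W 3) = (q^2 + 1) * (q^2 + q + 1)"
  unfolding q_def
  by (rule card_subspaces_between_eqI[OF assms(2-6), where m=2]) (simp_all add: eval_nat_numeral, algebra)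

lemma card_planes_through_point_in_solid:
  fixes P S :: "('a::{field,finite}^'n) set"
  defines "q \<equiv> CARD('a)"
  assumes "vec.subspace P" "vec.subspace S" "P \<subseteq> S" "vec.dim P = 1" "vec.dim S = 4"
  shows "card (subspaces_between P S 3) = q^2 + q + 1"
  unfolding q_def
  by (rule card_subspaces_between_eqI[OF assms(2-6), where m=2]) (simp_all add: eval_nat_numeral, algebra)

lemma card_planes_in_solid:
  fixes S :: "('a::{field,finite}^'n) set"
  defines "q \<equiv> CARD('a)"
  assumes "vec.subspace S" "vec.dim S = 4"
  shows "card (subspaces_between {0} S 3) = q^3 + q^2 + q + 1"
  unfolding q_def
  by (rule card_subspaces_between_eqI[OF vec.subspace_single_0 assms(2) _ _ assms(3), where u=0 and m=3])
     (simp_all add: vec.subspace_0[OF assms(2)] eval_nat_numeral, algebra)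

section \<open>Points, lines and planes through a point\<close>

lemma dim_span_Un_add_dim_Int:
  fixes A B :: "('a::field^'n) set"
  assumes "vec.subspace A" "vec.subspace B"
  shows "vec.dim (vec.span (A \<union> B)) + vec.dim (A \<inter> B) = vec.dim A + vec.dim B"
proof -
  have span_A: "vec.span A = A" and span_B: "vec.span B = B" using assms by simp_all
  have "vec.span (A \<union> B) = {x + y |x y. x \<in> A \<and> y \<in> B}"
    unfolding vec.span_Un span_A span_B ..
  then show ?thesis using vec.dim_sums_Int[OF assms] by simp
qed

lemma dim_Int_point_eq_0:
  fixes A X :: "('a::field^'n) set"
  assumes "vec.subspace A" "vec.subspace X" "vec.dim X = 1" "\<not> X \<subseteq> A"
  shows "vec.dim (A \<inter> X) = 0"
proof (rule ccontr)
  assume "vec.dim (A \<inter> X) \<noteq> 0"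
  then have "vec.dim X \<le> vec.dim (A \<inter> X)" using assms(3) by linarith
  then have "A \<inter> X = X"
    using vec.subspace_inter[OF assms(1,2)] assms(2) by (intro vec.subspace_dim_equal) auto
  then show False using assms(4) by blast
qed

lemma dim_span_Un_point:
  fixes A X :: "('a::field^'n) set"
  assumes "vec.subspace A" "vec.subspace X" "vec.dim X = 1" "\<not> X \<subseteq> A"
  shows "vec.dim (vec.span (A \<union> X)) = vec.dim A + 1"
  using dim_span_Un_add_dim_Int[OF assms(1,2)] dim_Int_point_eq_0[OF assms] assms(3) by simp

lemma line_through_point_exists:
  fixes P A :: "('a::field^'n) set"
  assumes "vec.subspace P" "vec.dim P = 1" "vec.subspace A" "P \<subseteq> A" "2 \<le> vec.dim A"
  obtains L where "vec.subspace L" "vec.dim L = 2" "P \<subseteq> L" "L \<subseteq> A"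
proof -
  have "\<not> A \<subseteq> P" using vec.dim_subset[of A P] assms by auto
  then obtain v where v: "v \<in> A" "v \<notin> P" by blast
  let ?L = "vec.span (insert v P)"
  have span_P: "vec.span P = P" using assms(1) by simp
  have "vec.dim ?L = 2" using vec.dim_insert[of v P, unfolded span_P] assms(2) v by simp
  moreover have "P \<subseteq> ?L" using vec.span_superset[of "insert v P"] by blast
  moreover have "?L \<subseteq> A" using assms v by (intro vec.span_minimal) auto
  ultimately show thesis using that by blast
qed

lemma dim_span_two_points_le:
  fixes A B :: "('a::field^'n) set"
  assumes "vec.subspace A" "vec.dim A = 1" "vec.subspace B" "vec.dim B = 1"
  shows "vec.dim (vec.span (A \<union> B)) \<le> 2"
  using dim_span_Un_add_dim_Int[OF assms(1,3)] assms(2,4) by linarith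

lemma noncollinear_points_distinct:
  fixes A B C :: "('a::field^'n) set"
  assumes "vec.subspace A" "vec.dim A = 1" "vec.subspace B" "vec.dim B = 1"
    "vec.subspace C" "vec.dim C = 1" "vec.dim (vec.span (A \<union> B \<union> C)) = 3"
  shows "\<not> A \<subseteq> B" "\<not> B \<subseteq> A" "\<not> A \<subseteq> C" "\<not> C \<subseteq> A" "\<not> B \<subseteq> C" "\<not> C \<subseteq> B"
proof -
  have not_two: False if "A \<union> B \<union> C = X \<union> Y" "X \<in> {A, B, C}" "Y \<in> {A, B, C}" for X Y
    using dim_span_two_points_le[of X Y] assms that by auto
  show "\<not> A \<subseteq> B" using not_two[of B C] by blast
  show "\<not> B \<subseteq> A" using not_two[of A C] by blast
  show "\<not> A \<subseteq> C" using not_two[of B C] by blast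
  show "\<not> C \<subseteq> A" using not_two[of A B] by blast
  show "\<not> B \<subseteq> C" using not_two[of A C] by blast
  show "\<not> C \<subseteq> B" using not_two[of A B] by blast
qed

lemma dim_Un_gt:
  fixes A B :: "('a::field^'n) set"
  assumes "\<not> B \<subseteq> vec.span A"
  shows "vec.dim A < vec.dim (A \<union> B)"
proof -
  have "vec.span A \<subset> vec.span (A \<union> B)"
    using assms vec.span_mono[of A "A \<union> B"] vec.span_superset[of "A \<union> B"] by auto
  then show ?thesis using vec.dim_psubset by (metis vec.dim_span)
qed

text \<open>If Q lay in the 4-space spanned by E and E', then E would meet the solid spanned by E' and Q
  in at least a line through P.\<close>
lemma plane_in_general_position:
  fixes E E' P Q :: "('a::field^'n) set"
  assumes E': "vec.subspace E'" "vec.dim E' = 3"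
    and E: "vec.subspace E" "vec.dim E = 3"
    and P: "vec.subspace P" "vec.dim P = 1" "P \<subseteq> E" "P \<subseteq> E'"
    and Q: "vec.subspace Q" "vec.dim Q = 1" "\<not> Q \<subseteq> E'"
    and no_line: "\<And>L. L \<in> subspaces_between P (vec.span (E' \<union> Q)) 2 \<Longrightarrow> \<not> L \<subseteq> E"
  shows "E \<inter> E' = P" "\<not> Q \<subseteq> vec.span (E \<union> E')"
proof -
  let ?T = "vec.span (E' \<union> Q)"
  have no_line': False
    if M: "vec.subspace M" "P \<subseteq> M" "M \<subseteq> E \<inter> ?T" "2 \<le> vec.dim M" for M
  proof -
    obtain L where "vec.subspace L" "vec.dim L = 2" "P \<subseteq> L" "L \<subseteq> M"
      using line_through_point_exists[OF P(1,2) M(1,2,4)] .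
    then show False using no_line[of L] M(3) by (auto simp: subspaces_between_def)
  qed
  have E'T: "E' \<subseteq> ?T" using vec.span_superset[of "E' \<union> Q"] by blast
  have sub_EE': "vec.subspace (E \<inter> E')" using vec.subspace_inter E E' by blast
  have "\<not> 2 \<le> vec.dim (E \<inter> E')"
    using no_line'[OF sub_EE'] E'T P by blast
  then show EE': "E \<inter> E' = P"
    using P sub_EE' by (intro vec.subspace_dim_equal[symmetric]) auto
  show "\<not> Q \<subseteq> vec.span (E \<union> E')"
  proof
    assume "Q \<subseteq> vec.span (E \<union> E')"
    then have "?T \<subseteq> vec.span (E \<union> E')"
      using vec.span_superset[of "E \<union> E'"] by (intro vec.span_minimal) auto
    then have "vec.span (E \<union> ?T) \<subseteq> vec.span (E \<union> E')"
      using vec.span_superset[of "E \<union> E'"] by (intro vec.span_minimal) auto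
    moreover have "vec.dim (vec.span (E \<union> E')) = 5"
      using dim_span_Un_add_dim_Int[OF E(1) E'(1)] EE' E E' P by simp
    ultimately have "vec.dim (vec.span (E \<union> ?T)) \<le> 5"
      by (metis vec.dim_subset vec.dim_span)
    moreover have "vec.dim ?T = 4" using dim_span_Un_point[OF E'(1) Q] E' by simp
    ultimately have "2 \<le> vec.dim (E \<inter> ?T)"
      using dim_span_Un_add_dim_Int[OF E(1) vec.subspace_span[of "E' \<union> Q"]] E by simp
    then show False
      using no_line'[of "E \<inter> ?T"] vec.subspace_inter[OF E(1) vec.subspace_span] P E'T by auto
  qed
qed

section \<open>Choosing flags greedily\<close>

definition planes_containing :: "'a::field vec7 set set \<Rightarrow> 'a vec7 set set" where
  "planes_containing Ls = {E. is_plane E \<and> (\<exists>L\<in>Ls. L \<subseteq> E)}"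

lemma card_planes_containing:
  fixes Ls :: "'a::{field,finite} vec7 set set"
  defines "q \<equiv> CARD('a)"
  assumes "\<And>L. L \<in> Ls \<Longrightarrow> vec.subspace L \<and> vec.dim L = 2"
  shows "card (planes_containing Ls) \<le> card Ls * (q^4 + q^3 + q^2 + q + 1)"
proof -
  have "planes_containing Ls = (\<Union>L\<in>Ls. subspaces_between L UNIV 3)"
    by (auto simp: planes_containing_def subspaces_between_def is_plane_iff)
  also have "card \<dots> \<le> (\<Sum>L\<in>Ls. card (subspaces_between L UNIV 3))"
    by (rule card_UN_le) simp
  also have "\<dots> = card Ls * (q^4 + q^3 + q^2 + q + 1)"
    using assms(2) by (simp add: card_planes_through_line q_def)
  finally show ?thesis .
qed

text \<open>A solid S through P2 meeting S0 in a plane is spanned by that plane and P2, and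
  the plane avoids P1 when S does.\<close>
lemma card_solids_meeting_solid_in_plane:
  fixes S0 P1 P2 :: "('a::{field,finite}^'n) set"
  assumes S0: "vec.subspace S0" "vec.dim S0 = 4"
    and P1: "vec.subspace P1" "vec.dim P1 = 1" "P1 \<subseteq> S0"
    and P2: "vec.subspace P2" "vec.dim P2 = 1" "\<not> P2 \<subseteq> S0"
  shows "card {S. vec.subspace S \<and> vec.dim S = 4 \<and> P2 \<subseteq> S \<and> \<not> P1 \<subseteq> S \<and> 3 \<le> vec.dim (S0 \<inter> S)}
         \<le> CARD('a)^3"
proof -
  let ?X = "{S. vec.subspace S \<and> vec.dim S = 4 \<and> P2 \<subseteq> S \<and> \<not> P1 \<subseteq> S \<and> 3 \<le> vec.dim (S0 \<inter> S)}"
  let ?Planes = "subspaces_between {0} S0 3 - subspaces_between P1 S0 3"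
  have trace: "S0 \<inter> S \<in> ?Planes \<and> S = vec.span ((S0 \<inter> S) \<union> P2)" if "S \<in> ?X" for S
  proof -
    have S: "vec.subspace S" "vec.dim S = 4" "P2 \<subseteq> S" "\<not> P1 \<subseteq> S" "3 \<le> vec.dim (S0 \<inter> S)"
      using that by auto
    have sub: "vec.subspace (S0 \<inter> S)" using S0 S vec.subspace_inter by blast
    have dim3: "vec.dim (S0 \<inter> S) = 3"
    proof (rule ccontr)
      assume "vec.dim (S0 \<inter> S) \<noteq> 3"
      then have "S0 \<inter> S = S0" using sub S0 S by (intro vec.subspace_dim_equal) auto
      then have "S0 = S" using S0 S by (intro vec.subspace_dim_equal) auto
      then show False using S P2 by blast
    qed
    have "vec.dim (vec.span ((S0 \<inter> S) \<union> P2)) = 4"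
      using dim_span_Un_point[OF sub P2(1,2)] dim3 P2(3) by auto
    moreover have "vec.span ((S0 \<inter> S) \<union> P2) \<subseteq> S" using S by (intro vec.span_minimal) auto
    ultimately have "vec.span ((S0 \<inter> S) \<union> P2) = S"
      using S by (intro vec.subspace_dim_equal) auto
    then show ?thesis
      using sub dim3 S(4) vec.subspace_0[OF sub] by (auto simp: subspaces_between_def)
  qed
  have "inj_on (\<lambda>S. S0 \<inter> S) ?X" using trace by (metis (no_types, lifting) inj_onI)
  then have "card ?X \<le> card ?Planes" using trace by (intro card_inj_on_le) auto
  also have "card ?Planes = card (subspaces_between {0} S0 3) - card (subspaces_between P1 S0 3)"
    by (rule card_Diff_subset) (auto simp: subspaces_between_def vec.subspace_0)
  also have "\<dots> = CARD('a)^3"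
    using card_planes_in_solid[OF S0] card_planes_through_point_in_solid[OF P1(1) S0(1) P1(3,2) S0(2)]
    by simp
  finally show ?thesis .
qed

lemma excluded_count_le:
  fixes q :: nat
  shows "(4*q^2 + 2*q + 2) * (q^4 + q^3 + q^2 + q + 1) + (q^2 + 1) * (q^2 + q + 1)
           + 2 * ((q^4 + q^3 + q^2 + q + 1) * (q^2 + 1))
         \<le> 6*q^6 + 10*q^5 + 17*q^4 + 15*q^3 + 15*q^2 + 9*q + 5"
proof -
  have "(4*q^2 + 2*q + 2) * (q^4 + q^3 + q^2 + q + 1) + (q^2 + 1) * (q^2 + q + 1)
           + 2 * ((q^4 + q^3 + q^2 + q + 1) * (q^2 + 1)) + (2*q^5 + 4*q^4 + 2*q^3 + q^2 + 2*q)
        = 6*q^6 + 10*q^5 + 17*q^4 + 15*q^3 + 15*q^2 + 9*q + 5"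
    by algebra
  then show ?thesis by linarith
qed

definition in_general_position ::
    "'a::field vec7 set \<Rightarrow> 'a vec7 set \<Rightarrow> 'a vec7 set \<Rightarrow> 'a vec7 set \<Rightarrow> 'a vec7 set \<Rightarrow> bool" where
  "in_general_position P Q R E E' \<longleftrightarrow>
     E \<inter> E' = P \<and> \<not> Q \<subseteq> vec.span (E \<union> E') \<and> \<not> R \<subseteq> vec.span (E \<union> E')"

lemma in_general_position_commute:
  "in_general_position P Q R E E' \<longleftrightarrow> in_general_position P Q R E' E"
  by (auto simp: in_general_position_def Un_commute)

lemma good_triple_iff:
  "good_triple C P Q R f1 f2 f3 \<longleftrightarrow>
     f1 \<in> C \<and> f2 \<in> C \<and> f3 \<in> C \<and> 6 \<le> vec.dim (fst f1 \<union> fst f2 \<union> fst f3) \<and>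
     (\<forall>f\<in>{f1, f2, f3}. \<not> Q \<subseteq> snd f \<and> \<not> R \<subseteq> snd f) \<and>
     in_general_position P Q R (fst f1) (fst f2) \<and>
     in_general_position P Q R (fst f1) (fst f3) \<and>
     in_general_position P Q R (fst f2) (fst f3)"
  unfolding good_triple_def Let_def numeral_3_eq_3 All_less_Suc2 lspan_eq pdim_eq
  by (auto simp: in_general_position_def Int_commute Un_commute)

lemma good_tripleD:
  assumes "good_triple C P Q R f1 f2 f3" "f \<in> {f1, f2, f3}"
  shows "f \<in> C" "P \<subseteq> fst f" "\<not> Q \<subseteq> snd f" "\<not> R \<subseteq> snd f"
  using assms by (auto simp: good_triple_iff in_general_position_def)

locale bounded_flag_set =
  fixes C :: "('a::{field,finite} vec7 set \<times> 'a vec7 set) set"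
  assumes flags: "\<And>f. f \<in> C \<Longrightarrow> is_flag f"
    and planes: "\<And>E. is_plane E \<Longrightarrow> card {f \<in> C. fst f = E} \<le> CARD('a) + 1"
    and solids: "\<And>S. is_solid S \<Longrightarrow> card {f \<in> C. snd f = S} \<le> CARD('a) + 1"
begin

lemma exists_flag_avoiding:
  assumes "D \<subseteq> C" "(CARD('a) + 1) * N < card D"
    and "\<forall>E\<in>BP. is_plane E" "\<forall>S\<in>BS. is_solid S" "card BP + card BS \<le> N"
  obtains f where "f \<in> D" "fst f \<notin> BP" "snd f \<notin> BS"
proof (rule ccontr)
  assume "\<not> thesis"
  with that have "D \<subseteq> (\<Union>E\<in>BP. {f \<in> C. fst f = E}) \<union> (\<Union>S\<in>BS. {f \<in> C. snd f = S})"
    using assms(1) by blast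
  then have "card D \<le> card ((\<Union>E\<in>BP. {f \<in> C. fst f = E}) \<union> (\<Union>S\<in>BS. {f \<in> C. snd f = S}))"
    by (rule card_mono[rotated]) simp
  also have "\<dots> \<le> (\<Sum>E\<in>BP. card {f \<in> C. fst f = E}) + (\<Sum>S\<in>BS. card {f \<in> C. snd f = S})"
    by (intro card_Un_le[THEN order_trans] add_mono card_UN_le) simp_all
  also have "\<dots> \<le> card BP * (CARD('a) + 1) + card BS * (CARD('a) + 1)"
  proof (rule add_mono)
    show "(\<Sum>E\<in>BP. card {f \<in> C. fst f = E}) \<le> card BP * (CARD('a) + 1)"
      using sum_bounded_above[of BP "\<lambda>E. card {f \<in> C. fst f = E}" "CARD('a) + 1"] assms(3) planes by simp
    show "(\<Sum>S\<in>BS. card {f \<in> C. snd f = S}) \<le> card BS * (CARD('a) + 1)"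
      using sum_bounded_above[of BS "\<lambda>S. card {f \<in> C. snd f = S}" "CARD('a) + 1"] assms(4) solids by simp
  qed
  also have "\<dots> \<le> (CARD('a) + 1) * N"
    using assms(5) by (metis add_mult_distrib mult.commute mult_le_mono2)
  finally show False using assms(2) by simp
qed

end

locale dense_point = bounded_flag_set C for C :: "('a::{field,finite} vec7 set \<times> 'a vec7 set) set" +
  fixes P Q R :: "'a vec7 set" and forbidden :: "'a vec7 set set"
  assumes P: "is_point P" and Q: "is_point Q" "\<not> Q \<subseteq> P" and R: "is_point R" "\<not> R \<subseteq> P"
    and dense: "(CARD('a) + 1) * (6*CARD('a)^6 + 10*CARD('a)^5 + 17*CARD('a)^4 + 15*CARD('a)^3
                  + 15*CARD('a)^2 + 9*CARD('a) + 5 + card forbidden) < card (Delta P C)"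
begin

lemma P_subspace: "vec.subspace P" "vec.dim P = 1"
  using P by (simp_all add: is_point_iff)

definition admissible :: "'a vec7 set \<times> 'a vec7 set \<Rightarrow> bool" where
  "admissible f \<longleftrightarrow> f \<in> Delta P C \<and> \<not> Q \<subseteq> snd f \<and> \<not> R \<subseteq> snd f \<and> snd f \<notin> forbidden"

lemma admissibleD:
  assumes "admissible f"
  shows "f \<in> C" "vec.subspace (fst f)" "vec.dim (fst f) = 3" "P \<subseteq> fst f"
    "\<not> Q \<subseteq> fst f" "\<not> R \<subseteq> fst f"
  using assms flags[of f] by (auto simp: admissible_def Delta_def is_flag_iff)

definition blocked_solids :: "'a vec7 set set" where
  "blocked_solids = subspaces_between (vec.span (P \<union> Q)) UNIV 4 \<union> subspaces_between (vec.span (P \<union> R)) UNIV 4"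

lemma card_blocked_solids:
  "card blocked_solids \<le> 2 * ((CARD('a)^4 + CARD('a)^3 + CARD('a)^2 + CARD('a) + 1) * (CARD('a)^2 + 1))"
proof -
  have solids_through: "card (subspaces_between (vec.span (P \<union> X)) UNIV 4)
      = (CARD('a)^4 + CARD('a)^3 + CARD('a)^2 + CARD('a) + 1) * (CARD('a)^2 + 1)"
    if "is_point X" "\<not> X \<subseteq> P" for X
  proof -
    have "vec.dim (vec.span (P \<union> X)) = 2"
      using dim_span_Un_point[OF P_subspace(1) _ _ that(2)] that(1) P_subspace by (simp add: is_point_iff)
    then show ?thesis by (rule card_solids_through_line[OF vec.subspace_span])
  qed
  show ?thesis
    using card_Un_le[of "subspaces_between (vec.span (P \<union> Q)) UNIV 4"
        "subspaces_between (vec.span (P \<union> R)) UNIV 4"] solids_through[OF Q] solids_through[OF R]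
    unfolding blocked_solids_def by linarith
qed

lemma admissible_if_not_blocked:
  assumes "f \<in> Delta P C" "snd f \<notin> blocked_solids" "snd f \<notin> forbidden"
  shows "admissible f"
proof -
  have flag: "vec.subspace (snd f)" "vec.dim (snd f) = 4" "P \<subseteq> snd f"
    using assms(1) flags[of f] by (auto simp: Delta_def is_flag_iff)
  have "\<not> X \<subseteq> snd f" if "subspaces_between (vec.span (P \<union> X)) UNIV 4 \<subseteq> blocked_solids" for X
  proof
    assume "X \<subseteq> snd f"
    then have "vec.span (P \<union> X) \<subseteq> snd f" using flag by (intro vec.span_minimal) auto
    then show False
      using that assms(2) flag vec.span_superset[of "P \<union> X"] by (auto simp: subspaces_between_def)
  qed
  then show ?thesis using assms(1,3) by (auto simp: admissible_def blocked_solids_def)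
qed

lemma exists_admissible_avoiding_planes:
  assumes "\<forall>E\<in>BP. is_plane E"
    and "card BP \<le> (4*CARD('a)^2 + 2*CARD('a) + 2) * (CARD('a)^4 + CARD('a)^3 + CARD('a)^2 + CARD('a) + 1)
                    + (CARD('a)^2 + 1) * (CARD('a)^2 + CARD('a) + 1)"
  obtains f where "admissible f" "fst f \<notin> BP"
proof -
  let ?BS = "blocked_solids \<union> (forbidden \<inter> Collect is_solid)"
  have "card (forbidden \<inter> Collect is_solid) \<le> card forbidden" by (rule card_mono) auto
  then have "card ?BS \<le> card blocked_solids + card forbidden"
    using card_Un_le[of blocked_solids "forbidden \<inter> Collect is_solid"] by linarith
  then have "card BP + card ?BS \<le> 6*CARD('a)^6 + 10*CARD('a)^5 + 17*CARD('a)^4 + 15*CARD('a)^3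
                  + 15*CARD('a)^2 + 9*CARD('a) + 5 + card forbidden"
    using card_blocked_solids assms(2) excluded_count_le[of "CARD('a)"] by linarith
  moreover have "Delta P C \<subseteq> C" "\<forall>S\<in>?BS. is_solid S"
    by (auto simp: Delta_def blocked_solids_def subspaces_between_def is_solid_iff)
  ultimately obtain f where f: "f \<in> Delta P C" "fst f \<notin> BP" "snd f \<notin> ?BS"
    using exists_flag_avoiding[OF _ dense assms(1)] by blast
  moreover have "is_solid (snd f)" using f(1) flags[of f] by (simp add: Delta_def is_flag_def)
  ultimately show thesis using that admissible_if_not_blocked[of f] by blast
qed

lemma exists_admissible_avoiding:
  assumes "\<And>L. L \<in> Ls \<Longrightarrow> vec.subspace L \<and> vec.dim L = 2" "card Ls \<le> 4*CARD('a)^2 + 2*CARD('a) + 2"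
    and "\<forall>E\<in>BP. is_plane E" "card BP \<le> (CARD('a)^2 + 1) * (CARD('a)^2 + CARD('a) + 1)"
  obtains f where "admissible f" "fst f \<notin> planes_containing Ls" "fst f \<notin> BP"
proof -
  have "card (planes_containing Ls) \<le> card Ls * (CARD('a)^4 + CARD('a)^3 + CARD('a)^2 + CARD('a) + 1)"
    using card_planes_containing[of Ls] assms(1) by blast
  then have "card (planes_containing Ls) \<le>
      (4*CARD('a)^2 + 2*CARD('a) + 2) * (CARD('a)^4 + CARD('a)^3 + CARD('a)^2 + CARD('a) + 1)"
    using order_trans mult_le_mono1[OF assms(2)] by blast
  then have "card (planes_containing Ls \<union> BP) \<le>
      (4*CARD('a)^2 + 2*CARD('a) + 2) * (CARD('a)^4 + CARD('a)^3 + CARD('a)^2 + CARD('a) + 1)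
        + (CARD('a)^2 + 1) * (CARD('a)^2 + CARD('a) + 1)"
    using card_Un_le[of "planes_containing Ls" BP] assms(4) by linarith
  moreover have "\<forall>E\<in>planes_containing Ls \<union> BP. is_plane E"
    using assms(3) by (auto simp: planes_containing_def)
  ultimately show thesis using that exists_admissible_avoiding_planes by blast
qed

definition blocked_lines :: "'a vec7 set \<Rightarrow> 'a vec7 set set" where
  "blocked_lines E = subspaces_between P (vec.span (E \<union> Q)) 2 \<union> subspaces_between P (vec.span (E \<union> R)) 2"

lemma blocked_lines_are_lines: "L \<in> blocked_lines E \<Longrightarrow> vec.subspace L \<and> vec.dim L = 2"
  by (auto simp: blocked_lines_def subspaces_between_def)

text \<open>The q + 1 lines through P in E lie in both solids.\<close>
lemma card_blocked_lines:
  assumes "admissible f"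
  shows "card (blocked_lines (fst f)) \<le> 2 * CARD('a)^2 + CARD('a) + 1"
proof -
  note E = admissibleD[OF assms] and P' = P_subspace
  have lines_in_solid: "card (subspaces_between P (vec.span (fst f \<union> X)) 2) = CARD('a)^2 + CARD('a) + 1"
    if "is_point X" "\<not> X \<subseteq> fst f" for X
    using card_lines_through_point_in_solid[OF P'(1) vec.subspace_span _ P'(2)]
      dim_span_Un_point[OF E(2) _ _ that(2)] that(1) E(3,4) vec.span_superset[of "fst f \<union> X"]
    by (auto simp: is_point_iff)
  have "subspaces_between P (fst f) 2
      \<subseteq> subspaces_between P (vec.span (fst f \<union> Q)) 2 \<inter> subspaces_between P (vec.span (fst f \<union> R)) 2"
    using vec.span_superset[of "fst f \<union> Q"] vec.span_superset[of "fst f \<union> R"]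
    by (auto simp: subspaces_between_def)
  then have "card (subspaces_between P (fst f) 2) \<le>
      card (subspaces_between P (vec.span (fst f \<union> Q)) 2 \<inter> subspaces_between P (vec.span (fst f \<union> R)) 2)"
    by (intro card_mono) simp_all
  then show ?thesis
    using card_Un_Int[of "subspaces_between P (vec.span (fst f \<union> Q)) 2"
        "subspaces_between P (vec.span (fst f \<union> R)) 2"]
      lines_in_solid[OF Q(1) E(5)] lines_in_solid[OF R(1) E(6)]
      card_lines_through_point_in_plane[OF P'(1) E(2,4) P'(2) E(3)]
    unfolding blocked_lines_def by simp
qed

lemma in_general_position_if_avoiding:
  assumes "admissible f" "admissible g"
    and "blocked_lines (fst f) \<subseteq> Ls" "fst g \<notin> planes_containing Ls"
  shows "in_general_position P Q R (fst f) (fst g)"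
proof -
  note E' = admissibleD[OF assms(1)] and E = admissibleD[OF assms(2)]
  have "fst g \<inter> fst f = P \<and> \<not> X \<subseteq> vec.span (fst g \<union> fst f)"
    if "is_point X" "\<not> X \<subseteq> fst f" "subspaces_between P (vec.span (fst f \<union> X)) 2 \<subseteq> Ls" for X
  proof -
    have "\<not> L \<subseteq> fst g" if "L \<in> subspaces_between P (vec.span (fst f \<union> X)) 2" for L
      using that \<open>subspaces_between P (vec.span (fst f \<union> X)) 2 \<subseteq> Ls\<close> assms(4) E(2,3)
      by (auto simp: planes_containing_def is_plane_iff)
    then show ?thesis
      using plane_in_general_position[OF E'(2,3) E(2,3) P_subspace E(4) E'(4), of X] that(1,2)
      by (auto simp: is_point_iff)
  qed
  then have "in_general_position P Q R (fst g) (fst f)"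
    using Q(1) R(1) E'(5,6) assms(3) by (auto simp: in_general_position_def blocked_lines_def)
  then show ?thesis using in_general_position_commute by blast
qed

lemma exists_good_triple:
  obtains g1 g2 g3 where "good_triple C P Q R g1 g2 g3" "\<forall>g\<in>{g1, g2, g3}. snd g \<notin> forbidden"
proof -
  obtain f1 where f1: "admissible f1"
    by (rule exists_admissible_avoiding[of "{}" "{}"]) auto
  obtain f2 where f2: "admissible f2" "fst f2 \<notin> planes_containing (blocked_lines (fst f1))"
    by (rule exists_admissible_avoiding[of "blocked_lines (fst f1)" "{}"])
       (use blocked_lines_are_lines card_blocked_lines[OF f1] in auto)
  define Ls where "Ls = blocked_lines (fst f1) \<union> blocked_lines (fst f2)"
  define U where "U = vec.span (fst f1 \<union> fst f2)"
  note E1 = admissibleD[OF f1] and E2 = admissibleD[OF f2(1)]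
  have gp12: "in_general_position P Q R (fst f1) (fst f2)"
    using in_general_position_if_avoiding[OF f1 f2(1) order_refl f2(2)] .
  have dim_U: "vec.dim U = 5"
    using dim_span_Un_add_dim_Int[OF E1(2) E2(2)] E1(3) E2(3) gp12 P_subspace(2)
    by (simp add: U_def in_general_position_def)
  have card_Ls: "card Ls \<le> 4*CARD('a)^2 + 2*CARD('a) + 2"
    using card_Un_le[of "blocked_lines (fst f1)" "blocked_lines (fst f2)"]
      card_blocked_lines[OF f1] card_blocked_lines[OF f2(1)] unfolding Ls_def by linarith
  have card_planes_U: "card (subspaces_between P U 3) = (CARD('a)^2 + 1) * (CARD('a)^2 + CARD('a) + 1)"
    using card_planes_through_point_in_4space[OF P_subspace(1) vec.subspace_span _ P_subspace(2)
        dim_U[unfolded U_def]] E1(4) vec.span_superset[of "fst f1 \<union> fst f2"]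
    unfolding U_def by blast
  obtain f3 where f3: "admissible f3" "fst f3 \<notin> planes_containing Ls"
      "fst f3 \<notin> subspaces_between P U 3"
    by (rule exists_admissible_avoiding[of Ls "subspaces_between P U 3"])
       (use card_Ls card_planes_U blocked_lines_are_lines in \<open>auto simp: Ls_def subspaces_between_def is_plane_iff\<close>)
  have gp13: "in_general_position P Q R (fst f1) (fst f3)"
    using in_general_position_if_avoiding[OF f1 f3(1) _ f3(2)] by (simp add: Ls_def)
  have gp23: "in_general_position P Q R (fst f2) (fst f3)"
    using in_general_position_if_avoiding[OF f2(1) f3(1) _ f3(2)] by (simp add: Ls_def)
  have "\<not> fst f3 \<subseteq> vec.span (fst f1 \<union> fst f2)"
    using f3(3) admissibleD[OF f3(1)] by (auto simp: U_def subspaces_between_def)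
  then have "6 \<le> vec.dim (fst f1 \<union> fst f2 \<union> fst f3)"
    using dim_Un_gt dim_U unfolding U_def by fastforce
  then show thesis
    using gp12 gp13 gp23 f1 f2(1) f3(1)
    by (intro that[of f1 f2 f3]) (auto simp: good_triple_iff admissible_def Delta_def)
qed

end

context bounded_flag_set
begin

lemma exists_good_triple_if_dense:
  assumes "is_point P" "is_point Q" "\<not> Q \<subseteq> P" "is_point R" "\<not> R \<subseteq> P"
    and "(CARD('a) + 1) * (6*CARD('a)^6 + 10*CARD('a)^5 + 17*CARD('a)^4 + 15*CARD('a)^3
           + 15*CARD('a)^2 + 9*CARD('a) + 5) < card (Delta P C)"
  shows "\<exists>f1 f2 f3. good_triple C P Q R f1 f2 f3"
proof -
  interpret dense_point C P Q R "{}"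
    by unfold_locales (use assms in simp_all)
  show ?thesis by (rule exists_good_triple) blast
qed

lemma exists_good_triple_avoiding_solids:
  assumes good: "good_triple C P1 P2 P3 f1 f2 f3"
    and points: "is_point P1" "is_point P2" "is_point P3" "\<not> P1 \<subseteq> P2" "\<not> P3 \<subseteq> P2"
    and dense: "(CARD('a) + 1) * (6*CARD('a)^6 + 10*CARD('a)^5 + 17*CARD('a)^4 + 18*CARD('a)^3
                  + 15*CARD('a)^2 + 9*CARD('a) + 5) < card (Delta P2 C)"
  shows "\<exists>g1 g2 g3. good_triple C P2 P1 P3 g1 g2 g3 \<and>
           (\<forall>f\<in>{f1, f2, f3}. \<forall>g\<in>{g1, g2, g3}. pdim (snd f \<inter> snd g) \<le> 1)"
proof -
  define close where "close f =
    {S. vec.subspace S \<and> vec.dim S = 4 \<and> P2 \<subseteq> S \<and> \<not> P1 \<subseteq> S \<and> 3 \<le> vec.dim (snd f \<inter> S)}"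
    for f :: "'a vec7 set \<times> 'a vec7 set"
  define close_solids where "close_solids = close f1 \<union> close f2 \<union> close f3"
  have card_close: "card (close f) \<le> CARD('a)^3" if "f \<in> {f1, f2, f3}" for f
  proof -
    have "is_flag f" "P1 \<subseteq> fst f" "\<not> P2 \<subseteq> snd f"
      using flags good_tripleD[OF good that] by auto
    then show ?thesis
      using card_solids_meeting_solid_in_plane[of "snd f" P1 P2] points(1,2)
      by (auto simp: close_def is_flag_iff is_point_iff)
  qed
  have "card close_solids \<le> 3 * CARD('a)^3"
    using card_Un_le[of "close f1 \<union> close f2" "close f3"] card_Un_le[of "close f1" "close f2"]
      card_close[of f1] card_close[of f2] card_close[of f3]
    unfolding close_solids_def by simp
  then have "6*CARD('a)^6 + 10*CARD('a)^5 + 17*CARD('a)^4 + 15*CARD('a)^3 + 15*CARD('a)^2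
              + 9*CARD('a) + 5 + card close_solids
      \<le> 6*CARD('a)^6 + 10*CARD('a)^5 + 17*CARD('a)^4 + 18*CARD('a)^3 + 15*CARD('a)^2
              + 9*CARD('a) + 5"
    by linarith
  then have "(CARD('a) + 1) * (6*CARD('a)^6 + 10*CARD('a)^5 + 17*CARD('a)^4 + 15*CARD('a)^3
              + 15*CARD('a)^2 + 9*CARD('a) + 5 + card close_solids) < card (Delta P2 C)"
    using le_less_trans[OF mult_le_mono2 dense] by blast
  then interpret dense_point C P2 P1 P3 close_solids
    using points by unfold_locales simp_all
  obtain g1 g2 g3 where g: "good_triple C P2 P1 P3 g1 g2 g3" "\<forall>g\<in>{g1, g2, g3}. snd g \<notin> close_solids"
    by (rule exists_good_triple)
  have "pdim (snd f \<inter> snd g) \<le> 1" if "f \<in> {f1, f2, f3}" "g \<in> {g1, g2, g3}" for f g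
  proof -
    have "is_flag g" "P2 \<subseteq> fst g" "\<not> P1 \<subseteq> snd g" "snd g \<notin> close f"
      using flags good_tripleD[OF g(1) that(2)] g(2) that by (auto simp: close_solids_def)
    then show ?thesis by (auto simp: close_def is_flag_iff pdim_eq)
  qed
  then show ?thesis using g(1) by blast
qed

end

theorem lemma4p1:
  fixes C :: "('a::{field,finite} vec7 set \<times> 'a vec7 set) set"
    and P1 P2 P3 :: "'a vec7 set"
  defines "q \<equiv> CARD('a)"
  assumes indep: "kneser_indep C"
    and planes: "\<And>E. is_plane E \<Longrightarrow> card {f \<in> C. fst f = E} \<le> q + 1"
    and solids: "\<And>S. is_solid S \<Longrightarrow> card {f \<in> C. snd f = S} \<le> q + 1"
    and pts: "is_point P1" "is_point P2" "is_point P3"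
    and noncol: "pdim (lspan (P1 \<union> P2 \<union> P3)) = 2"
  shows
    "(card (Delta P1 C) > (q+1)*(6*q^6+10*q^5+17*q^4+15*q^3+15*q^2+9*q+5) \<longrightarrow>
       (\<exists>f1 f2 f3. good_triple C P1 P2 P3 f1 f2 f3))
     \<and>
     (\<forall>f1 f2 f3. good_triple C P1 P2 P3 f1 f2 f3 \<and>
        card (Delta P2 C) > (q+1)*(6*q^6+10*q^5+17*q^4+18*q^3+15*q^2+9*q+5) \<longrightarrow>
        (\<exists>g1 g2 g3. good_triple C P2 P1 P3 g1 g2 g3 \<and>
           (\<forall>f\<in>{f1,f2,f3}. \<forall>g\<in>{g1,g2,g3}. pdim (snd f \<inter> snd g) \<le> 1)))"
proof -
  interpret bounded_flag_set C
    using indep planes solids by unfold_locales (auto simp: kneser_indep_def q_def)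
  have "vec.dim (vec.span (P1 \<union> P2 \<union> P3)) = 3"
    using noncol by (simp add: lspan_eq pdim_eq)
  then have distinct: "\<not> P2 \<subseteq> P1" "\<not> P3 \<subseteq> P1" "\<not> P1 \<subseteq> P2" "\<not> P3 \<subseteq> P2"
    using noncollinear_points_distinct[of P1 P2 P3] pts by (simp_all add: is_point_iff)
  show ?thesis
    using exists_good_triple_if_dense[OF pts(1,2) distinct(1) pts(3) distinct(2)]
      exists_good_triple_avoiding_solids[OF _ pts distinct(3,4)]
    unfolding q_def by blast
qed

end
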